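(* Let $N\ge 0$ be an integer, let $q$ be a nonzero complex number with $q^j\neq 1$ for $1\le j\le N$, and let $a,b,c$ be complex numbers with $b,c\neq 0$, $b/c\notin\{q^{1-N},\dots,q^{N-1}\}$ and $bc\notin\{1,q^{-1},\dots,q^{1-N}\}$. Then, as polynomials in $x$, $$h_N(x;a)=\sum_{k=0}^N C_k^N(a,b,c)\,h_k(x;b)\,h_{N-k}(x;c),$$ where $$C_k^N(a,b,c)=q^{k(k-N)}\binom{N}{k}_q\frac{(a/c;q)_k\,(q^{N-k}ac;q)_k\,(a/b;q)_{N-k}\,(q^kab;q)_{N-k}}{(q^{k-N}b/c;q)_k\,(q^{-k}c/b;q)_{N-k}\,(bc;q)_N}.$$ Equivalently, with $x=\xi+\xi^{-1}$, $${}_8W_7(q^{-N}b/c;\,q^{-N},q^{1-N}/(ac),a/c,b\xi,b\xi^{-1};q,q)=\frac{(cb,c/b,a\xi,a\xi^{-1};q)_N}{(ab,a/b,c\xi,c\xi^{-1};q)_N}.$$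
   Context: $(a;q)_k=\prod_{j=0}^{k-1}(1-aq^j)$, $(a_1,\dots,a_n;q)_k=\prod_i(a_i;q)_k$, $\binom{N}{k}_q=\frac{(q;q)_N}{(q;q)_k(q;q)_{N-k}}$. $h_k(x;a)=\prod_{j=0}^{k-1}(1-axq^j+a^2q^{2j})=(a\xi,a\xi^{-1};q)_k$ where $\xi+\xi^{-1}=x$. Very-well-poised series: ${}_{r+1}W_r(a;b_1,\dots,b_{r-2};q,z)=\sum_{k\ge0}\frac{1-aq^{2k}}{1-a}\frac{(a,b_1,\dots,b_{r-2};q)_k}{(q,aq/b_1,\dots,aq/b_{r-2};q)_k}z^k$, which terminates when some $b_i=q^{-n}$, $n\in\mathbb Z_{\ge0}$. *)

theory Defs
  imports Complex_Main
begin

definition qpoch :: "complex \<Rightarrow> complex \<Rightarrow> nat \<Rightarrow> complex" where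
  "qpoch a q k = (\<Prod>j<k. 1 - a * q ^ j)"

definition qbinom :: "complex \<Rightarrow> nat \<Rightarrow> nat \<Rightarrow> complex" where
  "qbinom q N k = qpoch q q N / (qpoch q q k * qpoch q q (N - k))"

definition hpoly :: "complex \<Rightarrow> nat \<Rightarrow> complex \<Rightarrow> complex \<Rightarrow> complex" where
  "hpoly q k x a = (\<Prod>j<k. 1 - a * x * q ^ j + a ^ 2 * q ^ (2 * j))"

definition connC :: "complex \<Rightarrow> nat \<Rightarrow> nat \<Rightarrow> complex \<Rightarrow> complex \<Rightarrow> complex \<Rightarrow> complex" where
  "connC q N k a b c =
     q powi (int k * (int k - int N)) * qbinom q N k *
     (qpoch (a / c) q k * qpoch (q ^ (N - k) * a * c) q k *
      qpoch (a / b) q (N - k) * qpoch (q ^ k * a * b) q (N - k)) /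
     (qpoch (q powi (int k - int N) * b / c) q k *
      qpoch (q powi (- int k) * c / b) q (N - k) *
      qpoch (b * c) q N)"

end

theory Submission
  imports Defs
begin

text \<open>Multiplying an expansion of h_N(x;a) by the next factor
  1 - a q^N x + a^2 q^{2N}, and writing this quadratic as a combination of the next factors of
  h_k(x;b) and h_{N-k}(x;c), yields an expansion of h_{N+1}(x;a) whose coefficients obey a
  Pascal-type recurrence. The explicit coefficients C_k^N satisfy the same recurrence: after
  pulling out the q-Pochhammer factors common to the three coefficients involved, it becomes a
  single rational identity in q, a, b, c, q^k and q^{N-k}.\<close>

lemma qpoch_0 [simp]: "qpoch x q 0 = 1"
  by (simp add: qpoch_def)

lemma qpoch_Suc: "qpoch x q (Suc n) = qpoch x q n * (1 - x * q ^ n)"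
  by (simp add: qpoch_def)

lemma qpoch_Suc_shift: "qpoch x q (Suc n) = (1 - x) * qpoch (x * q) q n"
  unfolding qpoch_def prod.lessThan_Suc_shift by (simp add: mult.assoc)

lemma qpoch_shift_base: "qpoch x q n * (1 - x * q ^ n) = (1 - x) * qpoch (x * q) q n"
  by (metis qpoch_Suc qpoch_Suc_shift)

lemma qpoch_divide_base:
  assumes "q \<noteq> 0" "y \<noteq> 0" "y * q \<noteq> x * q ^ n"
  shows "qpoch (x / (y * q)) q n = (y * q - x) * qpoch (x / y) q n / (y * q - x * q ^ n)"
proof -
  have "qpoch (x / (y * q)) q n * (1 - x / (y * q) * q ^ n) =
      (1 - x / (y * q)) * qpoch (x / y) q n"
    using qpoch_shift_base[of "x / (y * q)" q n] assms by simp
  with assms show ?thesis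
    by (simp add: divide_simps)
qed

lemma qpoch_nonzero: "(\<And>j. j < n \<Longrightarrow> x * q ^ j \<noteq> 1) \<Longrightarrow> qpoch x q n \<noteq> 0"
  unfolding qpoch_def by (auto simp: prod_zero_iff)

lemma hpoly_Suc: "hpoly q (Suc n) x a = hpoly q n x a * (1 - a * q ^ n * x + (a * q ^ n)\<^sup>2)"
  by (simp add: hpoly_def power_mult_distrib power_mult mult.commute mult.left_commute)

text \<open>Coefficient of 1 - u x + u^2 when 1 - d x + d^2 is written as a combination of
  1 - u x + u^2 and 1 - v x + v^2: evaluate at x = v + 1/v, where the latter vanishes.\<close>
definition quad_split_coeff :: "complex \<Rightarrow> complex \<Rightarrow> complex \<Rightarrow> complex" where
  "quad_split_coeff d u v = (d - v) * (1 - d * v) / ((u - v) * (1 - u * v))"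

lemma quad_split:
  assumes "u \<noteq> v" "u * v \<noteq> 1"
  shows "1 - d * x + d\<^sup>2 =
    quad_split_coeff d u v * (1 - u * x + u\<^sup>2) + quad_split_coeff d v u * (1 - v * x + v\<^sup>2)"
proof -
  define D where "D = (u - v) * (1 - u * v)"
  have "D \<noteq> 0"
    using assms by (simp add: D_def)
  have "(v - u) * (1 - v * u) = - D"
    by (simp add: D_def algebra_simps)
  then have coeff_u: "quad_split_coeff d u v = (d - v) * (1 - d * v) / D"
    and coeff_v: "quad_split_coeff d v u = - ((d - u) * (1 - d * u)) / D"
    unfolding quad_split_coeff_def D_def by simp_all
  show ?thesis
    unfolding coeff_u coeff_v using \<open>D \<noteq> 0\<close>
    by (simp add: field_simps) (simp add: D_def algebra_simps power2_eq_square)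
qed

lemma hpoly_Suc_expand:
  fixes C :: "nat \<Rightarrow> complex"
  assumes expansion: "hpoly q n x a = (\<Sum>k\<le>n. C k * hpoly q k x b * hpoly q (n - k) x c)"
    and separated: "\<And>k. k \<le> n \<Longrightarrow> b * q ^ k \<noteq> c * q ^ (n - k)"
    and "b * c * q ^ n \<noteq> 1"
  shows "hpoly q (Suc n) x a = (\<Sum>k\<le>n.
      quad_split_coeff (a * q ^ n) (b * q ^ k) (c * q ^ (n - k)) * C k *
        (hpoly q (Suc k) x b * hpoly q (n - k) x c) +
      quad_split_coeff (a * q ^ n) (c * q ^ (n - k)) (b * q ^ k) * C k *
        (hpoly q k x b * hpoly q (Suc (n - k)) x c))"
proof -
  have "hpoly q (Suc n) x a =
      (\<Sum>k\<le>n. C k * hpoly q k x b * hpoly q (n - k) x c * (1 - a * q ^ n * x + (a * q ^ n)\<^sup>2))"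
    by (simp add: hpoly_Suc expansion sum_distrib_right)
  also have "\<dots> = (\<Sum>k\<le>n.
      quad_split_coeff (a * q ^ n) (b * q ^ k) (c * q ^ (n - k)) * C k *
        (hpoly q (Suc k) x b * hpoly q (n - k) x c) +
      quad_split_coeff (a * q ^ n) (c * q ^ (n - k)) (b * q ^ k) * C k *
        (hpoly q k x b * hpoly q (Suc (n - k)) x c))"
  proof (rule sum.cong)
    fix k
    assume "k \<in> {..n}"
    then have "b * q ^ k * (c * q ^ (n - k)) = b * c * q ^ n"
      by (simp add: ac_simps flip: power_add)
    with \<open>b * c * q ^ n \<noteq> 1\<close> have "b * q ^ k * (c * q ^ (n - k)) \<noteq> 1"
      by metis
    with separated[of k] \<open>k \<in> {..n}\<close>
    have split: "1 - a * q ^ n * x + (a * q ^ n)\<^sup>2 =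
        quad_split_coeff (a * q ^ n) (b * q ^ k) (c * q ^ (n - k)) *
          (1 - b * q ^ k * x + (b * q ^ k)\<^sup>2) +
        quad_split_coeff (a * q ^ n) (c * q ^ (n - k)) (b * q ^ k) *
          (1 - c * q ^ (n - k) * x + (c * q ^ (n - k))\<^sup>2)"
      by (intro quad_split) simp_all
    show "C k * hpoly q k x b * hpoly q (n - k) x c * (1 - a * q ^ n * x + (a * q ^ n)\<^sup>2) =
      quad_split_coeff (a * q ^ n) (b * q ^ k) (c * q ^ (n - k)) * C k *
        (hpoly q (Suc k) x b * hpoly q (n - k) x c) +
      quad_split_coeff (a * q ^ n) (c * q ^ (n - k)) (b * q ^ k) * C k *
        (hpoly q k x b * hpoly q (Suc (n - k)) x c)"
      unfolding split hpoly_Suc by (simp add: algebra_simps)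
  qed simp
  finally show ?thesis .
qed

lemma sum_atMost_Suc_pascal:
  fixes f g :: "nat \<Rightarrow> 'a::comm_semiring_1" and u :: "nat \<Rightarrow> nat \<Rightarrow> 'a"
  shows "(\<Sum>k\<le>n. f k * u (Suc k) (n - k) + g k * u k (Suc (n - k))) =
    (\<Sum>k\<le>Suc n.
      ((if k = 0 then 0 else f (k - 1)) + (if k = Suc n then 0 else g k)) * u k (Suc n - k))"
proof -
  have "(\<Sum>k\<le>Suc n. (if k = 0 then 0 else f (k - 1)) * u k (Suc n - k)) =
      (\<Sum>k\<le>n. f k * u (Suc k) (n - k))"
    by (subst sum.atMost_Suc_shift) simp
  moreover have "(\<Sum>k\<le>Suc n. (if k = Suc n then 0 else g k) * u k (Suc n - k)) =
      (\<Sum>k\<le>n. g k * u k (Suc (n - k)))"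
    by (simp add: Suc_diff_le)
  ultimately show ?thesis
    by (simp add: sum.distrib distrib_right)
qed

text \<open>connC q (k + l) k, indexed by k and l = N - k and free of negative powers of q.\<close>
definition conn_coeff :: "complex \<Rightarrow> nat \<Rightarrow> nat \<Rightarrow> complex \<Rightarrow> complex \<Rightarrow> complex \<Rightarrow> complex" where
  "conn_coeff q k l a b c =
     qpoch q q (k + l) * qpoch (a / c) q k * qpoch (q ^ l * a * c) q k *
       qpoch (a / b) q l * qpoch (q ^ k * a * b) q l /
     (q ^ (k * l) * qpoch q q k * qpoch q q l * qpoch (b / (c * q ^ l)) q k *
       qpoch (c / (b * q ^ k)) q l * qpoch (b * c) q (k + l))"

lemma connC_eq_conn_coeff:
  assumes "q \<noteq> 0"
  shows "connC q (k + l) k a b c = conn_coeff q k l a b c"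
proof -
  have "int k * (int k - int (k + l)) = - int (k * l)" and "int k - int (k + l) = - int l"
    by simp_all
  then have power_kl: "q powi (int k * (int k - int (k + l))) = inverse (q ^ (k * l))"
    and ratio_l: "q powi (int k - int (k + l)) * b / c = b / (c * q ^ l)"
    and ratio_k: "q powi (- int k) * c / b = c / (b * q ^ k)"
    using assms by (simp_all only: power_int_minus power_int_of_nat) (simp_all add: field_simps)
  show ?thesis
    unfolding connC_def qbinom_def conn_coeff_def add_diff_cancel_left' power_kl ratio_l ratio_k
    by (simp add: divide_inverse ac_simps)
qed

lemma conn_coeff_swap: "conn_coeff q k l a b c = conn_coeff q l k a c b"
  unfolding conn_coeff_def by (simp add: ac_simps)

text \<open>The factor shared by conn_coeff at (i + 1, m + 1), (i, m + 1) and (i + 1, m); each of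
  these is conn_common times a rational function of q^i and q^m.\<close>
definition conn_common :: "complex \<Rightarrow> nat \<Rightarrow> nat \<Rightarrow> complex \<Rightarrow> complex \<Rightarrow> complex \<Rightarrow> complex" where
  "conn_common q i m a b c =
     qpoch q q (Suc (i + m)) * qpoch (a / c) q i * qpoch (q ^ Suc m * a * c) q i *
       qpoch (a / b) q m * qpoch (q ^ Suc i * a * b) q m /
     (q ^ (i * m) * qpoch q q i * qpoch q q m * qpoch (b / (c * q ^ m)) q i *
       qpoch (c / (b * q ^ i)) q m * qpoch (b * c) q (Suc (i + m)))"

lemma conn_common_swap: "conn_common q i m a b c = conn_common q m i a c b"
  unfolding conn_common_def by (simp add: ac_simps)

text \<open>The Pascal recurrence for conn_coeff divided by conn_common, with t = q^i and s = q^m.\<close>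
lemma conn_pascal_identity:
  fixes q a b c t s :: complex
  assumes "q * t \<noteq> 1" "q * s \<noteq> 1" "c * s * q \<noteq> b" "b * t * q \<noteq> c" "b * t \<noteq> c * s"
    "b * c * q * t * s \<noteq> 1" "c * s * q \<noteq> b * t" "b * t * q \<noteq> c * s"
  shows "q * (1 - q * q * t * s) * (c - a * t) * (b - a * s) *
        (1 - q * a * c * t * s) * (1 - q * a * b * t * s) /
      ((1 - q * t) * (1 - q * s) * (c * s * q - b) * (b * t * q - c) * (1 - b * c * q * t * s)) =
    quad_split_coeff (a * q * t * s) (b * t) (c * s * q) *
      ((b - a * s) * (1 - a * b * t) * (c * s * q - b * t) /
       ((1 - q * s) * (c * s * q - b) * (b * t - c * s))) +
    quad_split_coeff (a * q * t * s) (c * s) (b * t * q) *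
      ((c - a * t) * (1 - a * c * s) * (b * t * q - c * s) /
       ((1 - q * t) * (b * t * q - c) * (c * s - b * t)))"
proof -
  have nonzero: "1 - q * t \<noteq> 0" "1 - q * s \<noteq> 0" "c * s * q - b \<noteq> 0" "b * t * q - c \<noteq> 0"
    "b * t - c * s \<noteq> 0" "c * s - b * t \<noteq> 0" "1 - b * c * q * t * s \<noteq> 0"
    "b * t - c * s * q \<noteq> 0" "c * s - b * t * q \<noteq> 0"
    "1 - b * t * (c * s * q) \<noteq> 0" "1 - c * s * (b * t * q) \<noteq> 0"
    using assms by (auto simp: algebra_simps)
  show ?thesis
    unfolding quad_split_coeff_def times_divide_times_eq
    apply (subst add_frac_eq)
      apply (intro no_zero_divisors nonzero)+
    apply (subst frac_eq_eq)
      apply (intro no_zero_divisors nonzero)+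
    apply algebra
    done
qed

locale connection_params =
  fixes q b c :: complex and N :: nat
  assumes q_nonzero: "q \<noteq> 0" and b_nonzero: "b \<noteq> 0" and c_nonzero: "c \<noteq> 0"
    and q_power_ne_1: "\<And>j. 1 \<le> j \<Longrightarrow> j \<le> N \<Longrightarrow> q ^ j \<noteq> 1"
    and b_c_separated: "\<And>i j. i < N \<Longrightarrow> j < N \<Longrightarrow> b * q ^ i \<noteq> c * q ^ j"
    and bc_power_ne_1: "\<And>j. j < N \<Longrightarrow> b * c * q ^ j \<noteq> 1"
begin

lemma swap: "connection_params q c b N"
  using q_nonzero b_nonzero c_nonzero q_power_ne_1 b_c_separated bc_power_ne_1
  by unfold_locales (auto simp: mult.commute[of c b] dest: sym)

lemma qpoch_q_nonzero: "k \<le> N \<Longrightarrow> qpoch q q k \<noteq> 0"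
  by (rule qpoch_nonzero) (use q_power_ne_1 in \<open>auto simp flip: power_Suc\<close>)

lemma qpoch_bc_nonzero: "k \<le> N \<Longrightarrow> qpoch (b * c) q k \<noteq> 0"
  by (rule qpoch_nonzero) (use bc_power_ne_1 in auto)

lemma qpoch_ratio_nonzero:
  assumes "k \<le> N" "l < N"
  shows "qpoch (b / (c * q ^ l)) q k \<noteq> 0"
proof (rule qpoch_nonzero)
  fix j
  assume "j < k"
  with assms have "b * q ^ j \<noteq> c * q ^ l"
    by (intro b_c_separated) auto
  then show "b / (c * q ^ l) * q ^ j \<noteq> 1"
    using c_nonzero q_nonzero by (simp add: field_simps)
qed

lemma conn_coeff_0_left:
  "l \<le> N \<Longrightarrow> conn_coeff q 0 l a b c =
    qpoch (a / b) q l * qpoch (a * b) q l / (qpoch (c / b) q l * qpoch (b * c) q l)"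
  using qpoch_q_nonzero[of l] unfolding conn_coeff_def by simp

lemma conn_coeff_0_Suc:
  assumes "Suc m \<le> N"
  shows "conn_coeff q 0 (Suc m) a b c =
    quad_split_coeff (a * q ^ m) (c * q ^ m) b * conn_coeff q 0 m a b c"
proof -
  have "qpoch (c / b) q m \<noteq> 0" "qpoch (b * c) q m \<noteq> 0"
    using connection_params.qpoch_ratio_nonzero[OF swap, of m 0] qpoch_bc_nonzero[of m] assms
    by simp_all
  moreover have "c * q ^ m \<noteq> b" "b * c * q ^ m \<noteq> 1"
    using b_c_separated[of 0 m] bc_power_ne_1[of m] assms by auto
  ultimately show ?thesis
    using b_nonzero
    unfolding conn_coeff_0_left[OF assms] conn_coeff_0_left[OF Suc_leD[OF assms]]
      quad_split_coeff_def qpoch_Suc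
    by (simp add: divide_simps) (simp add: algebra_simps)
qed

lemma conn_coeff_Suc_0:
  assumes "Suc m \<le> N"
  shows "conn_coeff q (Suc m) 0 a b c =
    quad_split_coeff (a * q ^ m) (b * q ^ m) c * conn_coeff q m 0 a b c"
  using connection_params.conn_coeff_0_Suc[OF swap assms] by (simp add: conn_coeff_swap[of q _ 0])

lemma conn_common_qpochs_nonzero:
  assumes "i + m + 2 \<le> N"
  shows "qpoch q q i \<noteq> 0" "qpoch q q m \<noteq> 0" "qpoch (b * c) q (Suc (i + m)) \<noteq> 0"
    "qpoch (b / (c * q ^ m)) q i \<noteq> 0" "qpoch (c / (b * q ^ i)) q m \<noteq> 0"
  using assms qpoch_q_nonzero qpoch_bc_nonzero qpoch_ratio_nonzero
    connection_params.qpoch_ratio_nonzero[OF swap] by simp_all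

lemma conn_coeff_Suc_right_common:
  assumes "i + m + 2 \<le> N"
  shows "conn_coeff q i (Suc m) a b c = conn_common q i m a b c *
    ((b - a * q ^ m) * (1 - a * b * q ^ i) * (c * q ^ m * q - b * q ^ i) /
     ((1 - q * q ^ m) * (c * q ^ m * q - b) * (b * q ^ i - c * q ^ m)))"
proof -
  have ab_factor:
    "qpoch (q ^ i * a * b) q (Suc m) = (1 - q ^ i * a * b) * qpoch (q ^ Suc i * a * b) q m"
    by (simp add: qpoch_Suc_shift ac_simps)
  have ratio_factor: "qpoch (b / (c * q ^ Suc m)) q i =
      (c * q ^ m * q - b) * qpoch (b / (c * q ^ m)) q i / (c * q ^ m * q - b * q ^ i)"
    using qpoch_divide_base[of q "c * q ^ m" b i] b_c_separated[of i "Suc m"] assms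
      q_nonzero c_nonzero by (simp add: ac_simps)
  have power_factor: "q ^ (i * Suc m) = q ^ (i * m) * q ^ i"
    by (simp add: power_add)
  note conn_common_qpochs_nonzero[OF assms]
  moreover have "q * q ^ m \<noteq> 1" "c * q ^ m * q \<noteq> b" "b * q ^ i \<noteq> c * q ^ m"
    "c * q ^ m * q \<noteq> b * q ^ i"
    using assms q_power_ne_1[of "Suc m"] b_c_separated[of 0 "Suc m"] b_c_separated[of i m]
      b_c_separated[of i "Suc m"] by (simp_all add: ac_simps)
  ultimately show ?thesis
    using q_nonzero b_nonzero c_nonzero
    unfolding conn_coeff_def conn_common_def add_Suc_right ab_factor ratio_factor power_factor
      qpoch_Suc[of "a / b" q m] qpoch_Suc[of q q m] qpoch_Suc[of "c / (b * q ^ i)" q m]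
    by (simp add: divide_simps)
qed

lemma conn_coeff_Suc_left_common:
  assumes "i + m + 2 \<le> N"
  shows "conn_coeff q (Suc i) m a b c = conn_common q i m a b c *
    ((c - a * q ^ i) * (1 - a * c * q ^ m) * (b * q ^ i * q - c * q ^ m) /
     ((1 - q * q ^ i) * (b * q ^ i * q - c) * (c * q ^ m - b * q ^ i)))"
  using connection_params.conn_coeff_Suc_right_common[OF swap, of m i a] assms
  by (simp add: conn_coeff_swap[of q "Suc i"] conn_common_swap[of q i] add.commute)

lemma conn_coeff_Suc_Suc_common:
  assumes "i + m + 2 \<le> N"
  shows "conn_coeff q (Suc i) (Suc m) a b c = conn_common q i m a b c *
    (q * (1 - q * q * q ^ i * q ^ m) * (c - a * q ^ i) * (b - a * q ^ m) *
       (1 - q * a * c * q ^ i * q ^ m) * (1 - q * a * b * q ^ i * q ^ m) /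
     ((1 - q * q ^ i) * (1 - q * q ^ m) * (c * q ^ m * q - b) * (b * q ^ i * q - c) *
       (1 - b * c * q * q ^ i * q ^ m)))"
proof -
  have shift: "qpoch (x / (y * q ^ Suc n)) q (Suc k) =
      (1 - x / (y * q ^ Suc n)) * qpoch (x / (y * q ^ n)) q k" for x y :: complex and n k
    using q_nonzero by (simp add: qpoch_Suc_shift)
  note conn_common_qpochs_nonzero[OF assms]
  moreover have "q * q ^ i \<noteq> 1" "q * q ^ m \<noteq> 1" "c * q ^ m * q \<noteq> b" "b * q ^ i * q \<noteq> c"
    "b * c * q * q ^ i * q ^ m \<noteq> 1"
    using assms q_power_ne_1[of "Suc i"] q_power_ne_1[of "Suc m"] b_c_separated[of 0 "Suc m"]
      b_c_separated[of "Suc i" 0] bc_power_ne_1[of "Suc (i + m)"]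
    by (simp_all add: ac_simps power_add)
  ultimately show ?thesis
    using q_nonzero b_nonzero c_nonzero
    unfolding conn_coeff_def conn_common_def shift add_Suc_right add_Suc
      qpoch_Suc[of q q "Suc (i + m)"] qpoch_Suc[of "b * c" q "Suc (i + m)"]
      qpoch_Suc[of q q i] qpoch_Suc[of "a / c" q i] qpoch_Suc[of "q ^ Suc m * a * c" q i]
      qpoch_Suc[of q q m] qpoch_Suc[of "a / b" q m] qpoch_Suc[of "q ^ Suc i * a * b" q m]
    by (simp add: divide_simps power_add) (simp add: algebra_simps)
qed

lemma conn_coeff_Suc_Suc:
  assumes "i + m + 2 \<le> N"
  shows "conn_coeff q (Suc i) (Suc m) a b c =
    quad_split_coeff (a * q ^ Suc (i + m)) (b * q ^ i) (c * q ^ Suc m) *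
      conn_coeff q i (Suc m) a b c +
    quad_split_coeff (a * q ^ Suc (i + m)) (c * q ^ m) (b * q ^ Suc i) *
      conn_coeff q (Suc i) m a b c"
proof -
  have "q * q ^ i \<noteq> 1" "q * q ^ m \<noteq> 1" "c * q ^ m * q \<noteq> b" "b * q ^ i * q \<noteq> c"
    "b * q ^ i \<noteq> c * q ^ m" "b * c * q * q ^ i * q ^ m \<noteq> 1"
    "c * q ^ m * q \<noteq> b * q ^ i" "b * q ^ i * q \<noteq> c * q ^ m"
    using assms q_power_ne_1[of "Suc i"] q_power_ne_1[of "Suc m"] bc_power_ne_1[of "Suc (i + m)"]
      b_c_separated[of 0 "Suc m"] b_c_separated[of "Suc i" 0] b_c_separated[of i m]
      b_c_separated[of i "Suc m"] b_c_separated[of "Suc i" m]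
    by (simp_all add: ac_simps power_add)
  note identity = conn_pascal_identity[OF this, of a]
  have powers: "a * q ^ Suc (i + m) = a * q * q ^ i * q ^ m" "c * q ^ Suc m = c * q ^ m * q"
    "b * q ^ Suc i = b * q ^ i * q"
    by (simp_all add: power_add ac_simps)
  show ?thesis
    unfolding conn_coeff_Suc_Suc_common[OF assms] conn_coeff_Suc_right_common[OF assms]
      conn_coeff_Suc_left_common[OF assms] identity powers
    by (simp only: distrib_left mult_ac)
qed

lemma conn_coeff_recurrence:
  assumes "Suc n \<le> N" "k \<le> Suc n"
  shows "conn_coeff q k (Suc n - k) a b c =
    (if k = 0 then 0 else
       quad_split_coeff (a * q ^ n) (b * q ^ (k - 1)) (c * q ^ (n - (k - 1))) *
       conn_coeff q (k - 1) (n - (k - 1)) a b c) +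
    (if k = Suc n then 0 else
       quad_split_coeff (a * q ^ n) (c * q ^ (n - k)) (b * q ^ k) * conn_coeff q k (n - k) a b c)"
proof (cases "k = 0 \<or> k = Suc n")
  case True
  then show ?thesis
    using conn_coeff_0_Suc[OF assms(1)] conn_coeff_Suc_0[OF assms(1)] by auto
next
  case False
  then obtain i where k: "k = Suc i"
    by (cases k) auto
  define m where "m = n - Suc i"
  with False assms(2) k have n: "n = Suc (i + m)"
    by simp
  show ?thesis
    using conn_coeff_Suc_Suc[of i m a] assms(1) False unfolding k n by simp
qed

lemma hpoly_conn_expansion:
  "n \<le> N \<Longrightarrow>
    hpoly q n x a = (\<Sum>k\<le>n. conn_coeff q k (n - k) a b c * hpoly q k x b * hpoly q (n - k) x c)"
proof (induction n)
  case 0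
  then show ?case
    by (simp add: hpoly_def conn_coeff_def)
next
  case (Suc n)
  define f where "f k =
    quad_split_coeff (a * q ^ n) (b * q ^ k) (c * q ^ (n - k)) * conn_coeff q k (n - k) a b c" for k
  define g where "g k =
    quad_split_coeff (a * q ^ n) (c * q ^ (n - k)) (b * q ^ k) * conn_coeff q k (n - k) a b c" for k
  define u where "u k l = hpoly q k x b * hpoly q l x c" for k l
  have "b * q ^ k \<noteq> c * q ^ (n - k)" if "k \<le> n" for k
    using b_c_separated that Suc.prems by simp
  moreover have "b * c * q ^ n \<noteq> 1"
    using bc_power_ne_1 Suc.prems by simp
  ultimately have "hpoly q (Suc n) x a = (\<Sum>k\<le>n. f k * u (Suc k) (n - k) + g k * u k (Suc (n - k)))"
    unfolding f_def g_def u_def using Suc by (intro hpoly_Suc_expand) simp_all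
  also have "\<dots> = (\<Sum>k\<le>Suc n.
      ((if k = 0 then 0 else f (k - 1)) + (if k = Suc n then 0 else g k)) * u k (Suc n - k))"
    by (rule sum_atMost_Suc_pascal)
  also have "\<dots> = (\<Sum>k\<le>Suc n. conn_coeff q k (Suc n - k) a b c * u k (Suc n - k))"
    unfolding f_def g_def using Suc.prems
    by (intro sum.cong) (simp_all add: conn_coeff_recurrence)
  finally show ?case
    by (simp add: u_def mult.assoc)
qed

end

lemma connection_params_of_ratio_conditions:
  assumes "q \<noteq> 0" "b \<noteq> 0" "c \<noteq> 0" "\<forall>j\<in>{1..N}. q ^ j \<noteq> 1"
    and "\<forall>j::int. 1 - int N \<le> j \<and> j \<le> int N - 1 \<longrightarrow> b / c \<noteq> q powi j"
    and "\<forall>j::nat. j < N \<longrightarrow> b * c \<noteq> q powi (- int j)"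
  shows "connection_params q b c N"
proof
  fix i j
  assume "i < N" "j < N"
  then have "b / c \<noteq> q powi (int j - int i)"
    using assms(5) by simp
  then show "b * q ^ i \<noteq> c * q ^ j"
    using assms(1-3) by (auto simp: power_int_diff field_simps)
next
  fix j
  assume "j < N"
  then have "b * c \<noteq> inverse (q ^ j)"
    using assms(6) by (simp add: power_int_minus)
  then show "b * c * q ^ j \<noteq> 1"
    using assms(1) by (auto simp: field_simps)
qed (use assms in auto)

theorem mainTheorem2:
  fixes N :: nat and q a b c :: complex
  assumes "q \<noteq> 0"
    and "\<forall>j\<in>{1..N}. q ^ j \<noteq> 1"
    and "b \<noteq> 0" and "c \<noteq> 0"
    and "\<forall>j::int. 1 - int N \<le> j \<and> j \<le> int N - 1 \<longrightarrow> b / c \<noteq> q powi j"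
    and "\<forall>j::nat. j < N \<longrightarrow> b * c \<noteq> q powi (- int j)"
  shows "\<forall>x::complex. hpoly q N x a =
           (\<Sum>k\<le>N. connC q N k a b c * hpoly q k x b * hpoly q (N - k) x c)"
proof
  fix x
  interpret connection_params q b c N
    using assms by (intro connection_params_of_ratio_conditions)
  have "connC q N k a b c = conn_coeff q k (N - k) a b c" if "k \<le> N" for k
    using connC_eq_conn_coeff[OF q_nonzero, of k "N - k"] that by simp
  then show "hpoly q N x a = (\<Sum>k\<le>N. connC q N k a b c * hpoly q k x b * hpoly q (N - k) x c)"
    using hpoly_conn_expansion[of N x a] by simp
qed

end
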